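(* Let $\pi_1(K^2)=\langle a,b\mid aba^{-1}=b^{-1}\rangle$ and let $\rho\colon\pi_1(K^2)\to\mathrm{Isom}(\mathbb{H}^3)$ preserve the orientation type with $\rho(b)\neq\mathrm{Id}$. Then: if $\rho$ is parabolic, $I_\gamma(\rho)=0$ for all $\gamma\in\langle a^2,b\rangle$; if $\rho$ is of type I, $I_{a^2}(\rho)\ge0$ and $I_b(\rho)<0$; if $\rho$ is of type II, $I_{a^2}(\rho)\le0$ and $I_b(\rho)>0$.
   Context: $\rho$ preserves the orientation type if $\rho(\gamma)$ is orientation-preserving iff $\gamma$ is an orientation-preserving loop of $K^2$ (so $\rho(a)$ reverses and $\rho(b)$ preserves orientation). Such $\rho$ with $\rho(b)\ne\mathrm{Id}$ is conjugate, as transformations $A=\rho(a)$, $B=\rho(b)$ of $\mathbb{C}\cup\{\infty\}$, to one of: parabolic: $A(z)=\overline z+1$ or $A(z)=\overline z$, with $B(z)=z+\tau i$, $\tau>0$; type I: $A(z)=e^{l}\overline z$, $B(z)=e^{\alpha i}z$, $l\ge0$, $\alpha\in(0,\pi]$; type II: $A(z)=e^{\alpha i}/\overline z$, $B(z)=e^{l}z$, $l>0$, $\alpha\in[0,\pi]$. For $\gamma$ in the orientation subgroup $\langle a^2,b\rangle$, $I_\gamma(\rho)=(\mathrm{trace}_{\mathrm{PSL}(2,\mathbb{C})}\rho(\gamma))^2-4$. *)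

theory Defs
  imports Complex_Main
begin

text \<open>
  Isometries of hyperbolic 3-space, viewed through their action on the Riemann sphere
  C u {infinity}.  A 2x2 complex matrix is a quadruple (a,b,c,d).  An isometry is a pair
  (M, r) with det M = 1, where r = False means the orientation-preserving map
  z -> (a z + b)/(c z + d), and r = True means the orientation-reversing map
  z -> (a conj(z) + b)/(c conj(z) + d).  Two pairs represent the same isometry iff
  the flags agree and the matrices agree up to sign (PSL(2,C)).
\<close>

type_synonym cmat = "complex \<times> complex \<times> complex \<times> complex"
type_synonym isom = "cmat \<times> bool"

fun mmul :: "cmat \<Rightarrow> cmat \<Rightarrow> cmat" where
  "mmul (a,b,c,d) (e,f,g,h) = (a*e+b*g, a*f+b*h, c*e+d*g, c*f+d*h)"

fun mdet :: "cmat \<Rightarrow> complex" where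
  "mdet (a,b,c,d) = a*d - b*c"

fun mtrace :: "cmat \<Rightarrow> complex" where
  "mtrace (a,b,c,d) = a + d"

fun mcnj :: "cmat \<Rightarrow> cmat" where
  "mcnj (a,b,c,d) = (cnj a, cnj b, cnj c, cnj d)"

fun madj :: "cmat \<Rightarrow> cmat" where
  "madj (a,b,c,d) = (d, -b, -c, a)"

fun mneg :: "cmat \<Rightarrow> cmat" where
  "mneg (a,b,c,d) = (-a, -b, -c, -d)"

definition isom_valid :: "isom \<Rightarrow> bool" where
  "isom_valid A \<longleftrightarrow> mdet (fst A) = 1"

definition isom_id :: isom where
  "isom_id = ((1,0,0,1), False)"

text \<open>Composition A \<circ> B (first B, then A).  Uses conj(N(w)) = conj(N)(conj w).\<close>
fun isom_comp :: "isom \<Rightarrow> isom \<Rightarrow> isom" where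
  "isom_comp (M, r) (N, s) = (mmul M (if r then mcnj N else N), r \<noteq> s)"

fun isom_inv :: "isom \<Rightarrow> isom" where
  "isom_inv (M, r) = ((if r then mcnj (madj M) else madj M), r)"

fun isom_eq :: "isom \<Rightarrow> isom \<Rightarrow> bool" where
  "isom_eq (M, r) (N, s) \<longleftrightarrow> r = s \<and> (M = N \<or> M = mneg N)"

definition orientation_preserving :: "isom \<Rightarrow> bool" where
  "orientation_preserving A \<longleftrightarrow> \<not> snd A"

text \<open>\<open>\<rho>\<close> is given by \<open>A = \<rho>(a)\<close>, \<open>B = \<rho>(b)\<close>; it is a representation of
  pi_1(K^2) = < a,b | a b a^-1 = b^-1 > iff the relation holds.\<close>
definition is_rep :: "isom \<Rightarrow> isom \<Rightarrow> bool" where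
  "is_rep A B \<longleftrightarrow> isom_valid A \<and> isom_valid B \<and>
     isom_eq (isom_comp (isom_comp A B) (isom_inv A)) (isom_inv B)"

definition preserves_orientation_type :: "isom \<Rightarrow> isom \<Rightarrow> bool" where
  "preserves_orientation_type A B \<longleftrightarrow> \<not> orientation_preserving A \<and> orientation_preserving B"

definition conj_pair :: "isom \<Rightarrow> isom \<Rightarrow> isom \<Rightarrow> isom \<Rightarrow> bool" where
  "conj_pair A B A0 B0 \<longleftrightarrow> (\<exists>G. isom_valid G \<and>
      isom_eq A (isom_comp (isom_comp G A0) (isom_inv G)) \<and>
      isom_eq B (isom_comp (isom_comp G B0) (isom_inv G)))"

text \<open>Normal forms (matrices of determinant one):
  z -> conj z + 1 ; z -> conj z ; z -> z + \<tau> i ;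
  z -> e^l conj z ; z -> e^(alpha i) z ; z -> e^(alpha i) / conj z ; z -> e^l z.\<close>
definition nf_conj_plus1 :: isom where "nf_conj_plus1 = ((1,1,0,1), True)"
definition nf_conj :: isom where "nf_conj = ((1,0,0,1), True)"
definition nf_transl :: "real \<Rightarrow> isom" where
  "nf_transl \<tau> = ((1, \<i> * complex_of_real \<tau>, 0, 1), False)"
definition nf_dil_conj :: "real \<Rightarrow> isom" where
  "nf_dil_conj l = ((complex_of_real (exp (l/2)), 0, 0, complex_of_real (exp (-l/2))), True)"
definition nf_rot :: "real \<Rightarrow> isom" where
  "nf_rot \<alpha> = ((cis (\<alpha>/2), 0, 0, cis (-\<alpha>/2)), False)"
definition nf_inv_conj :: "real \<Rightarrow> isom" where
  "nf_inv_conj \<alpha> = ((0, \<i> * cis (\<alpha>/2), \<i> * cis (-\<alpha>/2), 0), True)"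
definition nf_dil :: "real \<Rightarrow> isom" where
  "nf_dil l = ((complex_of_real (exp (l/2)), 0, 0, complex_of_real (exp (-l/2))), False)"

definition rep_parabolic :: "isom \<Rightarrow> isom \<Rightarrow> bool" where
  "rep_parabolic A B \<longleftrightarrow> (\<exists>\<tau>>0. conj_pair A B nf_conj_plus1 (nf_transl \<tau>)
                                  \<or> conj_pair A B nf_conj (nf_transl \<tau>))"

definition rep_typeI :: "isom \<Rightarrow> isom \<Rightarrow> bool" where
  "rep_typeI A B \<longleftrightarrow> (\<exists>l \<alpha>. l \<ge> 0 \<and> 0 < \<alpha> \<and> \<alpha> \<le> pi \<and> conj_pair A B (nf_dil_conj l) (nf_rot \<alpha>))"

definition rep_typeII :: "isom \<Rightarrow> isom \<Rightarrow> bool" where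
  "rep_typeII A B \<longleftrightarrow> (\<exists>l \<alpha>. l > 0 \<and> 0 \<le> \<alpha> \<and> \<alpha> \<le> pi \<and> conj_pair A B (nf_inv_conj \<alpha>) (nf_dil l))"

datatype gen = Asq | AsqInv | Bgen | BgenInv

fun rho_gen :: "isom \<Rightarrow> isom \<Rightarrow> gen \<Rightarrow> isom" where
  "rho_gen A B Asq = isom_comp A A"
| "rho_gen A B AsqInv = isom_inv (isom_comp A A)"
| "rho_gen A B Bgen = B"
| "rho_gen A B BgenInv = isom_inv B"

fun rho_word :: "isom \<Rightarrow> isom \<Rightarrow> gen list \<Rightarrow> isom" where
  "rho_word A B [] = isom_id"
| "rho_word A B (g # w) = isom_comp (rho_gen A B g) (rho_word A B w)"

text \<open>I_gamma(rho) = (trace rho(gamma))^2 - 4 (well defined on PSL(2,C)).\<close>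
definition I_word :: "isom \<Rightarrow> isom \<Rightarrow> gen list \<Rightarrow> complex" where
  "I_word A B w = (mtrace (fst (rho_word A B w)))\<^sup>2 - 4"

end

theory Submission
  imports Defs
begin

text \<open>
  \<open>I(\<gamma>)\<close> only sees the square of the trace of \<open>\<rho>(\<gamma>)\<close>, which is orientation-preserving
  for every word \<open>\<gamma>\<close> in \<open>a\<^sup>2\<close> and \<open>b\<close>.  Conjugating an orientation-preserving isometry
  by an orientation-preserving one keeps its trace, conjugating by an orientation-reversing one
  replaces the trace by its complex conjugate, and passing to \<open>-M\<close> changes only its sign.
  Hence \<open>I(\<gamma>)\<close> can be read off the normal forms, where it is real:
  in the parabolic case every \<open>\<rho>(\<gamma>)\<close> is a translation, so \<open>I(\<gamma>) = 0\<close>;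
  type I gives \<open>I(a\<^sup>2) = 4 sinh\<^sup>2 l\<close> and \<open>I(b) = -4 sin\<^sup>2 (\<alpha>/2)\<close>;
  type II gives \<open>I(a\<^sup>2) = -4 sin\<^sup>2 \<alpha>\<close> and \<open>I(b) = 4 sinh\<^sup>2 (l/2)\<close>.
\<close>

lemma mmul_assoc: "mmul (mmul M N) P = mmul M (mmul N P)"
  by (cases M rule: prod_cases4; cases N rule: prod_cases4; cases P rule: prod_cases4)
     (simp add: algebra_simps)

lemma mmul_one_left [simp]: "mmul (1,0,0,1) M = M"
  and mmul_one_right [simp]: "mmul M (1,0,0,1) = M"
  by (cases M rule: prod_cases4; simp)+

lemma mmul_madj_right: "mdet M = 1 \<Longrightarrow> mmul M (madj M) = (1,0,0,1)"
  and mmul_madj_left: "mdet M = 1 \<Longrightarrow> mmul (madj M) M = (1,0,0,1)"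
  by (cases M rule: prod_cases4; simp add: algebra_simps)+

lemma madj_mmul: "madj (mmul M N) = mmul (madj N) (madj M)"
  by (cases M rule: prod_cases4; cases N rule: prod_cases4) (simp add: algebra_simps)

lemma madj_madj [simp]: "madj (madj M) = M"
  by (cases M rule: prod_cases4) simp

lemma mcnj_mmul: "mcnj (mmul M N) = mmul (mcnj M) (mcnj N)"
  by (cases M rule: prod_cases4; cases N rule: prod_cases4) simp

lemma mcnj_mcnj [simp]: "mcnj (mcnj M) = M"
  by (cases M rule: prod_cases4) simp

lemma madj_mcnj: "madj (mcnj M) = mcnj (madj M)"
  by (cases M rule: prod_cases4) simp

lemma mneg_mmul_left: "mmul (mneg M) N = mneg (mmul M N)"
  and mneg_mmul_right: "mmul M (mneg N) = mneg (mmul M N)"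
  by (cases M rule: prod_cases4; cases N rule: prod_cases4; simp)+

lemma mcnj_mneg: "mcnj (mneg M) = mneg (mcnj M)"
  and madj_mneg: "madj (mneg M) = mneg (madj M)"
  by (cases M rule: prod_cases4; simp)+

lemma mtrace_mneg: "mtrace (mneg M) = - mtrace M"
  by (cases M rule: prod_cases4) simp

lemma mtrace_mcnj: "mtrace (mcnj M) = cnj (mtrace M)"
  by (cases M rule: prod_cases4) simp

lemma mtrace_mmul_madj: "mtrace (mmul (mmul G M) (madj G)) = mdet G * mtrace M"
  by (cases G rule: prod_cases4; cases M rule: prod_cases4) (simp add: algebra_simps)

lemma isom_comp_assoc: "isom_comp (isom_comp X Y) Z = isom_comp X (isom_comp Y Z)"
  by (cases X; cases Y; cases Z) (auto simp: mmul_assoc mcnj_mmul)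

lemma isom_comp_id_left [simp]: "isom_comp isom_id X = X"
  and isom_comp_id_right [simp]: "isom_comp X isom_id = X"
  by (cases X; simp add: isom_id_def)+

lemma isom_comp_inv_right: "isom_valid G \<Longrightarrow> isom_comp G (isom_inv G) = isom_id"
  and isom_comp_inv_left: "isom_valid G \<Longrightarrow> isom_comp (isom_inv G) G = isom_id"
  by (cases G; auto simp: isom_valid_def isom_id_def mmul_madj_right mmul_madj_left
                          mcnj_mmul [symmetric])+

lemma isom_inv_comp: "isom_inv (isom_comp X Y) = isom_comp (isom_inv Y) (isom_inv X)"
  by (cases X; cases Y) (auto simp: madj_mmul mcnj_mmul madj_mcnj)

lemma isom_inv_inv [simp]: "isom_inv (isom_inv X) = X"
  by (cases X) (simp add: madj_mcnj)

lemma isom_eq_refl: "isom_eq X X"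
  by (cases X) auto

lemma isom_eq_comp: "isom_eq X X' \<Longrightarrow> isom_eq Y Y' \<Longrightarrow> isom_eq (isom_comp X Y) (isom_comp X' Y')"
  by (cases X; cases X'; cases Y; cases Y') (auto simp: mneg_mmul_left mneg_mmul_right mcnj_mneg)

lemma isom_eq_inv: "isom_eq X X' \<Longrightarrow> isom_eq (isom_inv X) (isom_inv X')"
  by (cases X; cases X') (auto simp: mcnj_mneg madj_mneg)

lemma isom_eq_trace_square: "isom_eq X Y \<Longrightarrow> (mtrace (fst X))\<^sup>2 = (mtrace (fst Y))\<^sup>2"
  by (cases X; cases Y) (auto simp: power2_eq_square algebra_simps)

definition isom_conj :: "isom \<Rightarrow> isom \<Rightarrow> isom" where
  "isom_conj G X = isom_comp (isom_comp G X) (isom_inv G)"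

lemma conj_pair_iff:
  "conj_pair A B A0 B0 \<longleftrightarrow>
     (\<exists>G. isom_valid G \<and> isom_eq A (isom_conj G A0) \<and> isom_eq B (isom_conj G B0))"
  unfolding conj_pair_def isom_conj_def ..

lemma isom_conj_id: "isom_valid G \<Longrightarrow> isom_conj G isom_id = isom_id"
  unfolding isom_conj_def by (simp add: isom_comp_inv_right)

lemma isom_conj_comp:
  assumes "isom_valid G"
  shows "isom_conj G (isom_comp X Y) = isom_comp (isom_conj G X) (isom_conj G Y)"
proof -
  have "isom_comp (isom_conj G X) (isom_conj G Y)
      = isom_comp (isom_comp G X) (isom_comp (isom_comp (isom_inv G) G) (isom_comp Y (isom_inv G)))"
    unfolding isom_conj_def by (simp add: isom_comp_assoc)
  then show ?thesis
    using assms by (simp add: isom_comp_inv_left isom_conj_def isom_comp_assoc)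
qed

lemma isom_conj_inv: "isom_conj G (isom_inv X) = isom_inv (isom_conj G X)"
  unfolding isom_conj_def by (simp add: isom_inv_comp isom_comp_assoc)

lemma mtrace_isom_conj:
  assumes "isom_valid G" and "orientation_preserving X"
  shows "mtrace (fst (isom_conj G X))
           = (if orientation_preserving G then mtrace (fst X) else cnj (mtrace (fst X)))"
  using assms
  by (cases G; cases X)
     (auto simp: isom_conj_def isom_valid_def orientation_preserving_def mtrace_mmul_madj
                 mtrace_mcnj madj_mcnj [symmetric])

lemma rho_word_isom_conj:
  assumes "isom_valid G"
  shows "rho_word (isom_conj G A) (isom_conj G B) w = isom_conj G (rho_word A B w)"
proof (induction w)
  case Nil
  then show ?case using assms by (simp add: isom_conj_id)
next
  case (Cons g w)
  have "rho_gen (isom_conj G A) (isom_conj G B) g = isom_conj G (rho_gen A B g)"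
    by (cases g) (simp_all add: isom_conj_comp [OF assms] isom_conj_inv)
  then show ?case using Cons by (simp add: isom_conj_comp [OF assms])
qed

lemma rho_word_isom_eq:
  assumes "isom_eq A A'" and "isom_eq B B'"
  shows "isom_eq (rho_word A B w) (rho_word A' B' w)"
proof (induction w)
  case Nil
  then show ?case by (simp add: isom_eq_refl)
next
  case (Cons g w)
  have "isom_eq (rho_gen A B g) (rho_gen A' B' g)"
    using assms by (cases g) (simp_all add: isom_eq_comp isom_eq_inv)
  then show ?case using Cons by (simp add: isom_eq_comp)
qed

lemma orientation_preserving_rho_word:
  "orientation_preserving B \<Longrightarrow> orientation_preserving (rho_word A B w)"
proof (induction w)
  case Nil
  then show ?case by (simp add: isom_id_def orientation_preserving_def)
next
  case (Cons g w)
  then show ?case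
    by (cases g; cases A; cases B; cases "rho_word A B w") (auto simp: orientation_preserving_def)
qed

lemma I_word_conj_pair:
  assumes "conj_pair A B A0 B0" and "orientation_preserving B0"
  shows "(\<forall>w. I_word A B w = I_word A0 B0 w) \<or> (\<forall>w. I_word A B w = cnj (I_word A0 B0 w))"
proof -
  obtain G where G: "isom_valid G"
    and A: "isom_eq A (isom_conj G A0)" and B: "isom_eq B (isom_conj G B0)"
    using assms(1) unfolding conj_pair_iff by blast
  have "I_word A B w = I_word (isom_conj G A0) (isom_conj G B0) w" for w
    unfolding I_word_def using isom_eq_trace_square [OF rho_word_isom_eq [OF A B]] by simp
  moreover have "I_word (isom_conj G A0) (isom_conj G B0) w
      = (if orientation_preserving G then I_word A0 B0 w else cnj (I_word A0 B0 w))" for w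
    unfolding I_word_def rho_word_isom_conj [OF G]
    using mtrace_isom_conj [OF G orientation_preserving_rho_word [OF assms(2)]] by simp
  ultimately show ?thesis by simp
qed

lemma I_word_conj_pair_real:
  assumes "conj_pair A B A0 B0" and "orientation_preserving B0" and "I_word A0 B0 w \<in> \<real>"
  shows "I_word A B w = I_word A0 B0 w"
  using I_word_conj_pair [OF assms(1,2)] assms(3) Reals_cnj_iff by metis

definition upper_unipotent :: "isom \<Rightarrow> bool" where
  "upper_unipotent X \<longleftrightarrow> (\<exists>x. X = ((1,x,0,1), False))"

lemma upper_unipotent_rho_word:
  assumes "\<And>g. upper_unipotent (rho_gen A B g)"
  shows "upper_unipotent (rho_word A B w)"
proof (induction w)
  case Nil
  then show ?case by (simp add: upper_unipotent_def isom_id_def)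
next
  case (Cons g w)
  then show ?case using assms [of g] by (auto simp: upper_unipotent_def)
qed

lemma I_word_nf_transl:
  assumes "A = nf_conj_plus1 \<or> A = nf_conj"
  shows "I_word A (nf_transl \<tau>) w = 0"
proof -
  have "upper_unipotent (rho_gen A (nf_transl \<tau>) g)" for g
    using assms by (cases g)
      (auto simp: upper_unipotent_def nf_conj_plus1_def nf_conj_def nf_transl_def)
  then obtain x where "rho_word A (nf_transl \<tau>) w = ((1,x,0,1), False)"
    using upper_unipotent_rho_word unfolding upper_unipotent_def by blast
  then show ?thesis by (simp add: I_word_def)
qed

lemma exp_plus_exp_minus: "exp x + exp (- x) = 2 * cosh (x :: real)"
  by (simp add: cosh_def)

lemma cis_plus_cis_minus: "cis x + cis (- x) = 2 * cos x"
  by (simp add: complex_eq_iff)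

lemma I_word_nf_dil_conj: "I_word (nf_dil_conj l) B [Asq] = 4 * sinh l ^ 2"
proof -
  have "exp (l/2) * exp (l/2) = exp l" "exp (- (l/2)) * exp (- (l/2)) = exp (- l)"
    by (simp_all add: exp_add [symmetric])
  then have "I_word (nf_dil_conj l) B [Asq] = of_real ((exp l + exp (- l))\<^sup>2 - 4)"
    by (simp add: I_word_def nf_dil_conj_def isom_id_def flip: of_real_mult)
  also have "\<dots> = 4 * sinh l ^ 2"
    by (simp add: exp_plus_exp_minus power_mult_distrib sinh_square_eq)
  finally show ?thesis .
qed

lemma I_word_nf_rot: "I_word A (nf_rot \<alpha>) [Bgen] = - 4 * sin (\<alpha>/2) ^ 2"
proof -
  have "I_word A (nf_rot \<alpha>) [Bgen] = (cis (\<alpha>/2) + cis (- (\<alpha>/2)))\<^sup>2 - 4"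
    by (cases A) (simp add: I_word_def nf_rot_def isom_id_def)
  also have "\<dots> = - 4 * sin (\<alpha>/2) ^ 2"
    by (simp only: cis_plus_cis_minus) (simp add: power_mult_distrib sin_squared_eq)
  finally show ?thesis .
qed

lemma I_word_nf_inv_conj: "I_word (nf_inv_conj \<alpha>) B [Asq] = - 4 * sin \<alpha> ^ 2"
proof -
  have "I_word (nf_inv_conj \<alpha>) B [Asq] = (cis \<alpha> + cis (- \<alpha>))\<^sup>2 - 4"
    by (simp add: I_word_def nf_inv_conj_def isom_id_def cis_cnj cis_mult algebra_simps)
  also have "\<dots> = - 4 * sin \<alpha> ^ 2"
    by (simp only: cis_plus_cis_minus) (simp add: power_mult_distrib sin_squared_eq)
  finally show ?thesis .
qed

lemma I_word_nf_dil: "I_word A (nf_dil l) [Bgen] = 4 * sinh (l/2) ^ 2"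
proof -
  have "I_word A (nf_dil l) [Bgen] = of_real ((exp (l/2) + exp (- (l/2)))\<^sup>2 - 4)"
    by (cases A) (simp add: I_word_def nf_dil_def isom_id_def)
  also have "\<dots> = 4 * sinh (l/2) ^ 2"
    by (simp only: exp_plus_exp_minus) (simp add: power_mult_distrib sinh_square_eq)
  finally show ?thesis .
qed

theorem lemma4p5:
  fixes A B :: isom
  assumes "is_rep A B"
    and "preserves_orientation_type A B"
    and "\<not> isom_eq B isom_id"
  shows "(rep_parabolic A B \<longrightarrow> (\<forall>w. I_word A B w = 0))
       \<and> (rep_typeI A B \<longrightarrow> I_word A B [Asq] \<in> \<real> \<and> Re (I_word A B [Asq]) \<ge> 0
                            \<and> I_word A B [Bgen] \<in> \<real> \<and> Re (I_word A B [Bgen]) < 0)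
       \<and> (rep_typeII A B \<longrightarrow> I_word A B [Asq] \<in> \<real> \<and> Re (I_word A B [Asq]) \<le> 0
                            \<and> I_word A B [Bgen] \<in> \<real> \<and> Re (I_word A B [Bgen]) > 0)"
proof (intro conjI impI allI)
  fix w
  assume "rep_parabolic A B"
  then obtain \<tau> A0 where "conj_pair A B A0 (nf_transl \<tau>)" and "A0 = nf_conj_plus1 \<or> A0 = nf_conj"
    unfolding rep_parabolic_def by blast
  moreover have "orientation_preserving (nf_transl \<tau>)"
    by (simp add: nf_transl_def orientation_preserving_def)
  ultimately show "I_word A B w = 0"
    using I_word_conj_pair_real I_word_nf_transl by (metis Reals_0)
next
  assume "rep_typeI A B"
  then obtain l \<alpha> where "0 < \<alpha>" "\<alpha> \<le> pi" and AB: "conj_pair A B (nf_dil_conj l) (nf_rot \<alpha>)"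
    unfolding rep_typeI_def by blast
  then have "sin (\<alpha>/2) > 0" by (intro sin_gt_zero) auto
  moreover have "orientation_preserving (nf_rot \<alpha>)"
    by (simp add: nf_rot_def orientation_preserving_def)
  ultimately show "I_word A B [Asq] \<in> \<real>" "Re (I_word A B [Asq]) \<ge> 0"
    "I_word A B [Bgen] \<in> \<real>" "Re (I_word A B [Bgen]) < 0"
    using I_word_conj_pair_real [OF AB] I_word_nf_dil_conj I_word_nf_rot by simp_all
next
  assume "rep_typeII A B"
  then obtain l \<alpha> where "0 < l" and AB: "conj_pair A B (nf_inv_conj \<alpha>) (nf_dil l)"
    unfolding rep_typeII_def by blast
  moreover have "orientation_preserving (nf_dil l)"
    by (simp add: nf_dil_def orientation_preserving_def)
  ultimately show "I_word A B [Asq] \<in> \<real>" "Re (I_word A B [Asq]) \<le> 0"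
    "I_word A B [Bgen] \<in> \<real>" "Re (I_word A B [Bgen]) > 0"
    using I_word_conj_pair_real [OF AB] I_word_nf_inv_conj I_word_nf_dil by simp_all
qed

end
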